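(* Let $A \in \mathbb{R}^{n\times n}$ and let $Q, D \in \mathbb{R}^{n\times n}$ be symmetric. Assume that $(A,D)$ is stabilizable and $(Q,A)$ is detectable, and let $P$ be the unique stabilizing solution of $A^T X + XA + Q - XDX = 0$. Let $$H = \begin{bmatrix} A & -D \\ -Q & -A^T\end{bmatrix},\qquad J=\begin{bmatrix}\mathbf{0}_n & I_n\\ -I_n & \mathbf{0}_n\end{bmatrix}.$$ Let $(\mu_j, v_j)$ and $(-\mu_j, v_{-j})$ be two right eigenpairs of $H$, where $\mu_j$ (and hence $-\mu_j$) is a (non-real) complex eigenvalue of $H$ with partial multiplicity $1$. Let $\theta_j := (v_j^T J v_{-j})^{-1}$ and $p_j = \theta_j J v_{-j}$, $q_j = \theta_j J v_j$. Then for any $\Delta\mu_j \in \mathbb{R}$ there exist $\tilde A\in\mathbb{R}^{n\times n}$ and symmetric $\tilde Q,\tilde D\in\mathbb{R}^{n\times n}$ such that $$H + 2\Delta\mu_j\,\mathrm{Re}\!\left(v_j p_j^T + v_{-j} q_j^T\right) = \begin{bmatrix} \tilde A & -\tilde D \\ -\tilde Q & -\tilde A^T\end{bmatrix}.$$ Moreover, if $\frac{\Delta\mu_j}{\mathrm{Re}(\mu_j)} > -1$, then $P$ is the unique stabilizing solution of $\tilde A^T X + X\tilde A + \tilde Q - X\tilde D X = 0$.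
   Context: A solution $X$ of $A^TX+XA+Q-XDX=0$ is stabilizing if $A-DX$ is Hurwitz; such a solution, if it exists, is unique. The partial multiplicity of an eigenvalue refers to the size of a Jordan block for that eigenvalue in the Jordan normal form; partial multiplicity $1$ means the Jordan blocks of that eigenvalue have size $1$. $\mathrm{Re}$ denotes the entrywise real part. The definition of $\theta_j$ presupposes $v_j^TJv_{-j}\neq 0$. *)

theory Defs
  imports Complex_Main "Jordan_Normal_Form.Jordan_Normal_Form" "Jordan_Normal_Form.Char_Poly"
begin

definition cmat :: "real mat \<Rightarrow> complex mat" where
  "cmat M = map_mat complex_of_real M"

definition hurwitz :: "real mat \<Rightarrow> bool" where
  "hurwitz M \<longleftrightarrow> (\<forall>ev. eigenvalue (cmat M) ev \<longrightarrow> Re ev < 0)"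

definition stabilizable :: "nat \<Rightarrow> real mat \<Rightarrow> real mat \<Rightarrow> bool" where
  "stabilizable n A B \<longleftrightarrow> (\<exists>K \<in> carrier_mat (dim_col B) n. hurwitz (A + B * K))"

definition detectable :: "nat \<Rightarrow> real mat \<Rightarrow> real mat \<Rightarrow> bool" where
  "detectable n C A \<longleftrightarrow> stabilizable n (transpose_mat A) (transpose_mat C)"

definition are_solution :: "nat \<Rightarrow> real mat \<Rightarrow> real mat \<Rightarrow> real mat \<Rightarrow> real mat \<Rightarrow> bool" where
  "are_solution n A Q D X \<longleftrightarrow> X \<in> carrier_mat n n \<and>
     transpose_mat A * X + X * A + Q - X * D * X = 0\<^sub>m n n"

definition stabilizing_solution :: "nat \<Rightarrow> real mat \<Rightarrow> real mat \<Rightarrow> real mat \<Rightarrow> real mat \<Rightarrow> bool" where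
  "stabilizing_solution n A Q D X \<longleftrightarrow> are_solution n A Q D X \<and> hurwitz (A - D * X)"

definition hamiltonian :: "real mat \<Rightarrow> real mat \<Rightarrow> real mat \<Rightarrow> real mat" where
  "hamiltonian A D Q = four_block_mat A (- D) (- Q) (- transpose_mat A)"

definition Jmat :: "nat \<Rightarrow> complex mat" where
  "Jmat n = four_block_mat (0\<^sub>m n n) (1\<^sub>m n) (- 1\<^sub>m n) (0\<^sub>m n n)"

definition outer_prod :: "'a::times vec \<Rightarrow> 'a vec \<Rightarrow> 'a mat" where
  "outer_prod v w = mat (dim_vec v) (dim_vec w) (\<lambda>(i,k). v $ i * w $ k)"

definition partial_multiplicity_one :: "complex mat \<Rightarrow> complex \<Rightarrow> bool" where
  "partial_multiplicity_one M \<mu> \<longleftrightarrow> eigenvalue M \<mu> \<and>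
     (\<forall>n_as. jordan_nf M n_as \<longrightarrow> (\<forall>(k, a) \<in> set n_as. a = \<mu> \<longrightarrow> k = 1))"

end

theory Submission
  imports Defs "Jordan_Normal_Form.Schur_Decomposition"
begin

text \<open>
  Write $S$ for the graph $\{(x, P x)\}$ of the stabilizing solution. A matrix $X$ solves the
  Riccati equation of a Hamiltonian matrix $H$ iff its graph is $H$-invariant, and $H$ then acts on
  the graph as $A - D X$. So $P$ stays stabilizing iff $S$ is invariant under the perturbed
  Hamiltonian matrix and the restriction is Hurwitz.

  Let $\nu \in \{\mu_j, -\mu_j\}$ be the eigenvalue with $\mathrm{Re}\,\nu < 0$. Its eigenvector
  lies in $S$, while the left eigenvectors for the eigenvalues $-\nu$ and $-\overline{\nu}$ of the
  right half plane vanish on $S$. On $S$ the perturbation therefore only adds multiples of the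
  eigenvector of $\nu$ and of its conjugate. Hence $S$ stays invariant, $\nu$ and $\overline{\nu}$
  move to $\nu \pm \Delta\mu_j$ and $\overline{\nu} \pm \Delta\mu_j$, and every other eigenvalue of the restriction is an eigenvalue of
  $A - D P$. The condition $\Delta\mu_j / \mathrm{Re}\,\mu_j > -1$ says exactly that
  $\mathrm{Re}(\nu \pm \Delta\mu_j) < 0$. Stabilizing solutions are unique because the difference of
  two of them solves a homogeneous Sylvester equation whose coefficients have disjoint spectra.
\<close>

lemma mat_eq_if_mult_vec_eq:
  fixes A B :: "'a::comm_ring_1 mat"
  assumes A: "A \<in> carrier_mat nr nc" and B: "B \<in> carrier_mat nr nc"
    and eq: "\<And>w. w \<in> carrier_vec nc \<Longrightarrow> A *\<^sub>v w = B *\<^sub>v w"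
  shows "A = B"
proof (rule eq_matI)
  fix i j assume "i < dim_row B" "j < dim_col B"
  then show "A $$ (i, j) = B $$ (i, j)"
    using arg_cong[OF eq[of "unit_vec nc j"], of "\<lambda>v. v $ i"] A B by auto
qed (use A B in auto)

lemma vec_eq_if_scalar_prod_eq:
  fixes u v :: "'a::comm_ring_1 vec"
  assumes u: "u \<in> carrier_vec n" and v: "v \<in> carrier_vec n"
    and eq: "\<And>y. y \<in> carrier_vec n \<Longrightarrow> u \<bullet> y = v \<bullet> y"
  shows "u = v"
proof (rule eq_vecI)
  fix i assume "i < dim_vec v"
  then show "u $ i = v $ i" using eq[of "unit_vec n i"] u v by simp
qed (use u v in simp)

lemma mat_eq_if_minus_eq_zero:
  fixes A B :: "'a::ab_group_add mat"
  assumes A: "A \<in> carrier_mat nr nc" and B: "B \<in> carrier_mat nr nc" and eq: "A - B = 0\<^sub>m nr nc"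
  shows "A = B"
proof (rule eq_matI)
  fix i j assume "i < dim_row B" "j < dim_col B"
  then show "A $$ (i, j) = B $$ (i, j)"
    using arg_cong[OF eq, of "\<lambda>M. M $$ (i, j)"] A B by simp
qed (use A B in auto)

lemma mat_eq_uminus_if_add_eq_zero:
  fixes A B :: "'a::ab_group_add mat"
  assumes A: "A \<in> carrier_mat nr nc" and B: "B \<in> carrier_mat nr nc" and eq: "A + B = 0\<^sub>m nr nc"
  shows "A = - B"
proof (rule eq_matI)
  fix i j assume "i < dim_row (- B)" "j < dim_col (- B)"
  then show "A $$ (i, j) = (- B) $$ (i, j)"
    using arg_cong[OF eq, of "\<lambda>M. M $$ (i, j)"] A B by (simp add: eq_neg_iff_add_eq_0)
qed (use A B in auto)

lemma smult_append_vec: "c \<cdot>\<^sub>v (x @\<^sub>v y) = (c \<cdot>\<^sub>v x) @\<^sub>v (c \<cdot>\<^sub>v y)"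
  by (rule eq_vecI) auto

lemma conjugate_append_vec: "conjugate (x @\<^sub>v y) = conjugate x @\<^sub>v conjugate y"
  by (rule eq_vecI) auto

lemma left_eigenvector_scalar_prod:
  fixes M :: "'a::comm_ring_1 mat"
  assumes M: "M \<in> carrier_mat N N" and b: "b \<in> carrier_vec N" and w: "w \<in> carrier_vec N"
    and lb: "transpose_mat M *\<^sub>v b = \<nu> \<cdot>\<^sub>v b"
  shows "b \<bullet> (M *\<^sub>v w) = \<nu> * (b \<bullet> w)"
  using transpose_vec_mult_scalar[OF M w b] lb b w by simp

lemma left_right_eigenvectors_orthogonal:
  fixes M :: "'a::field mat"
  assumes M: "M \<in> carrier_mat N N" and a: "a \<in> carrier_vec N" and b: "b \<in> carrier_vec N"
    and ra: "M *\<^sub>v a = \<alpha> \<cdot>\<^sub>v a" and lb: "transpose_mat M *\<^sub>v b = \<beta> \<cdot>\<^sub>v b" and ne: "\<alpha> \<noteq> \<beta>"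
  shows "b \<bullet> a = 0"
proof -
  have "\<beta> * (b \<bullet> a) = b \<bullet> (M *\<^sub>v a)"
    using left_eigenvector_scalar_prod[OF M b a lb] by simp
  also have "\<dots> = \<alpha> * (b \<bullet> a)" using ra a b by simp
  finally have "(\<beta> - \<alpha>) * (b \<bullet> a) = 0" by (simp add: algebra_simps)
  then show ?thesis using ne by simp
qed

section \<open>Sylvester equations\<close>

lemma eigenvalue_transpose_iff:
  fixes M :: "'a::field mat"
  assumes "M \<in> carrier_mat n n"
  shows "eigenvalue (transpose_mat M) l \<longleftrightarrow> eigenvalue M l"
  using eigenvalue_root_char_poly[OF assms] eigenvalue_root_char_poly[of "transpose_mat M" n] assms
  by simp

lemma eigenvalue_uminus_mat:
  fixes M :: "'a::field mat"
  assumes M: "M \<in> carrier_mat n n" and ev: "eigenvalue (- M) l"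
  shows "eigenvalue M (- l)"
proof -
  from ev obtain v where v: "v \<in> carrier_vec n" "v \<noteq> 0\<^sub>v n" and Mv: "(- M) *\<^sub>v v = l \<cdot>\<^sub>v v"
    unfolding eigenvalue_def eigenvector_def using M by auto
  have "M *\<^sub>v v = (- l) \<cdot>\<^sub>v v"
  proof (rule eq_vecI)
    fix i assume "i < dim_vec ((- l) \<cdot>\<^sub>v v)"
    then show "(M *\<^sub>v v) $ i = ((- l) \<cdot>\<^sub>v v) $ i"
      using arg_cong[OF Mv, of "\<lambda>x. x $ i"] v(1) M by (simp add: minus_equation_iff)
  qed (use M v in auto)
  then show ?thesis unfolding eigenvalue_def eigenvector_def using v M by auto
qed

lemma upper_triangular_diag_eigenvalue:
  fixes B :: "'a::field mat"
  assumes B: "B \<in> carrier_mat k k" and ut: "upper_triangular B" and j: "j < k"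
  shows "eigenvalue B (B $$ (j, j))"
proof -
  have root: "x \<in> set xs \<Longrightarrow> poly (\<Prod>a\<leftarrow>xs. [:- a, 1:]) x = 0" for x :: 'a and xs
    by (induction xs) auto
  have "B $$ (j, j) \<in> set (diag_mat B)" using B j unfolding diag_mat_def by auto
  then have "poly (char_poly B) (B $$ (j, j)) = 0"
    unfolding char_poly_upper_triangular[OF B ut] by (rule root)
  then show ?thesis using eigenvalue_root_char_poly[OF B] by simp
qed

lemma sylvester_upper_triangular_zero:
  fixes X B L :: "'a::field mat"
  assumes X: "X \<in> carrier_mat m m" and B: "B \<in> carrier_mat k k" and L: "L \<in> carrier_mat m k"
    and ut: "upper_triangular B" and eq: "X * L = L * B"
    and disj: "\<And>j. j < k \<Longrightarrow> \<not> eigenvalue X (B $$ (j, j))"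
  shows "L = 0\<^sub>m m k"
proof -
  have "col L j = 0\<^sub>v m" if "j < k" for j
    using that
  proof (induction j rule: less_induct)
    case (less j)
    have "X *\<^sub>v col L j = B $$ (j, j) \<cdot>\<^sub>v col L j"
    proof (rule eq_vecI)
      fix i assume "i < dim_vec (B $$ (j, j) \<cdot>\<^sub>v col L j)"
      then have i: "i < m" using L by simp
      have "(X *\<^sub>v col L j) $ i = (L * B) $$ (i, j)"
        using X L i less.prems by (simp flip: eq)
      also have "\<dots> = (\<Sum>l<k. L $$ (i, l) * B $$ (l, j))"
        using L B i less.prems by (simp add: scalar_prod_def lessThan_atLeast0)
      also have "\<dots> = (\<Sum>l<k. if l = j then L $$ (i, j) * B $$ (j, j) else 0)"
      proof (rule sum.cong[OF refl])
        fix l assume l: "l \<in> {..<k}"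
        consider "l < j" | "l = j" | "j < l" by linarith
        then show "L $$ (i, l) * B $$ (l, j) = (if l = j then L $$ (i, j) * B $$ (j, j) else 0)"
        proof cases
          case 1
          then show ?thesis
            using arg_cong[OF less.IH[of l], of "\<lambda>v. v $ i"] less.prems L i by auto
        next
          case 3
          then show ?thesis using ut B l unfolding upper_triangular_def by auto
        qed simp
      qed
      also have "\<dots> = (B $$ (j, j) \<cdot>\<^sub>v col L j) $ i"
        using L i less.prems by simp
      finally show "(X *\<^sub>v col L j) $ i = (B $$ (j, j) \<cdot>\<^sub>v col L j) $ i" .
    qed (use X L in auto)
    then show ?case
      using disj[OF less.prems] X L col_dim[of L j] unfolding eigenvalue_def eigenvector_def by auto
  qed
  then show ?thesis
    using L by (intro eq_matI) (auto dest!: arg_cong[where f = "\<lambda>v. v $ _"] simp: vec_eq_iff)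
qed

lemma sylvester_zero:
  fixes X Y L :: "complex mat"
  assumes X: "X \<in> carrier_mat m m" and Y: "Y \<in> carrier_mat k k" and L: "L \<in> carrier_mat m k"
    and eq: "X * L = L * Y"
    and disj: "\<And>l. eigenvalue X l \<Longrightarrow> \<not> eigenvalue Y l"
  shows "L = 0\<^sub>m m k"
proof -
  obtain es where "char_poly Y = (\<Prod>a\<leftarrow>es. [:- a, 1:])"
    using char_poly_factorized[OF Y] by blast
  then obtain B where B: "B \<in> carrier_mat k k" and ut: "upper_triangular B" and sim: "similar_mat Y B"
    using schur_decomposition_exists[OF Y] by blast
  from similar_matD[OF sim] obtain k' S T where carr: "{Y, B, S, T} \<subseteq> carrier_mat k' k'"
    and ST: "S * T = 1\<^sub>m k'" and TS: "T * S = 1\<^sub>m k'" and YB: "Y = S * B * T" by blast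
  have k': "k' = k" using carr Y by auto
  have S: "S \<in> carrier_mat k k" and T: "T \<in> carrier_mat k k" using carr k' by auto
  have "eigenvalue Y (B $$ (j, j))" if "j < k" for j
    using upper_triangular_diag_eigenvalue[OF B ut that] eigenvalue_root_char_poly[OF B]
      eigenvalue_root_char_poly[OF Y] char_poly_similar[OF sim] by simp
  then have disjB: "\<not> eigenvalue X (B $$ (j, j))" if "j < k" for j
    using disj that by blast
  have SB: "S * B \<in> carrier_mat k k" using S B by simp
  have "X * (L * S) = L * Y * S"
    using X L S by (simp flip: eq)
  also have "\<dots> = L * (S * B * T * S)"
    unfolding YB using assoc_mult_mat[OF L mult_carrier_mat[OF SB T] S] .
  also have "S * B * T * S = S * B"
    using assoc_mult_mat[OF SB T S] right_mult_one_mat[OF SB] by (simp add: TS k')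
  also have "L * (S * B) = L * S * B"
    using assoc_mult_mat[OF L S B] by simp
  finally have "L * S = 0\<^sub>m m k"
    using sylvester_upper_triangular_zero[OF X B _ ut _ disjB] L S by simp
  then have "L * S * T = 0\<^sub>m m k" using T by simp
  then show ?thesis using L S T by (simp add: ST k')
qed

section \<open>Complexification of real matrices\<close>

lemma cmat_dims[simp]: "dim_row (cmat M) = dim_row M" "dim_col (cmat M) = dim_col M"
  unfolding cmat_def by auto

lemma cmat_carrier_iff[simp]: "cmat M \<in> carrier_mat nr nc \<longleftrightarrow> M \<in> carrier_mat nr nc"
  unfolding carrier_mat_def by simp

lemma cmat_index[simp]:
  "i < dim_row M \<Longrightarrow> j < dim_col M \<Longrightarrow> cmat M $$ (i, j) = of_real (M $$ (i, j))"
  unfolding cmat_def by simp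

lemma cmat_mult: "A \<in> carrier_mat nr n \<Longrightarrow> B \<in> carrier_mat n nc \<Longrightarrow> cmat (A * B) = cmat A * cmat B"
  unfolding cmat_def by (rule of_real_hom.mat_hom_mult)

lemma cmat_add: "A \<in> carrier_mat nr nc \<Longrightarrow> B \<in> carrier_mat nr nc \<Longrightarrow> cmat (A + B) = cmat A + cmat B"
  unfolding cmat_def by (intro eq_matI) auto

lemma cmat_minus: "A \<in> carrier_mat nr nc \<Longrightarrow> B \<in> carrier_mat nr nc \<Longrightarrow> cmat (A - B) = cmat A - cmat B"
  unfolding cmat_def by (intro eq_matI) auto

lemma cmat_transpose: "cmat (transpose_mat A) = transpose_mat (cmat A)"
  unfolding cmat_def by (intro eq_matI) auto

lemma cmat_zero[simp]: "cmat (0\<^sub>m nr nc) = 0\<^sub>m nr nc"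
  unfolding cmat_def by (intro eq_matI) auto

lemma cmat_inj: "cmat A = cmat B \<Longrightarrow> A = B"
  unfolding cmat_def by (rule of_real_hom.mat_hom_inj)

lemma cmat_mult_vec_index:
  assumes i: "i < dim_row M" and v: "dim_vec v = dim_col M"
  shows "(cmat M *\<^sub>v v) $ i = (\<Sum>k = 0..<dim_col M. complex_of_real (M $$ (i, k)) * v $ k)"
  using i v unfolding cmat_def by (auto simp: scalar_prod_def intro!: sum.cong)

lemma cmat_mult_vec_conjugate:
  assumes v: "dim_vec v = dim_col M"
  shows "cmat M *\<^sub>v conjugate v = conjugate (cmat M *\<^sub>v v)"
proof (rule eq_vecI)
  fix i assume "i < dim_vec (conjugate (cmat M *\<^sub>v v))"
  then have i: "i < dim_row M" by simp
  have real_row: "conjugate (row (cmat M) i) = row (cmat M) i"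
    using i by (intro eq_vecI) auto
  have "(cmat M *\<^sub>v conjugate v) $ i = conjugate (row (cmat M) i) \<bullet> conjugate v"
    using i unfolding real_row by simp
  also have "\<dots> = conjugate (row (cmat M) i \<bullet> v)"
    using v by (intro conjugate_sprod_vec[symmetric, of _ "dim_col M"]) (auto intro: carrier_vecI)
  finally show "(cmat M *\<^sub>v conjugate v) $ i = conjugate (cmat M *\<^sub>v v) $ i"
    using i by simp
qed simp

lemma cmat_eigen_conjugate:
  assumes v: "dim_vec v = dim_col M" and ev: "cmat M *\<^sub>v v = \<nu> \<cdot>\<^sub>v v"
  shows "cmat M *\<^sub>v conjugate v = cnj \<nu> \<cdot>\<^sub>v conjugate v"
  using cmat_mult_vec_conjugate[OF v] by (simp add: ev conjugate_smult_vec)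

lemma hurwitz_eigenvalue: "hurwitz M \<Longrightarrow> eigenvalue (cmat M) l \<Longrightarrow> Re l < 0"
  unfolding hurwitz_def by auto

lemma hurwitz_transpose_eigenvalue:
  "M \<in> carrier_mat n n \<Longrightarrow> hurwitz M \<Longrightarrow> eigenvalue (transpose_mat (cmat M)) l \<Longrightarrow> Re l < 0"
  using hurwitz_eigenvalue eigenvalue_transpose_iff[of "cmat M" n] by auto

lemma hurwitz_sylvester_zero:
  fixes F G K :: "real mat"
  assumes F: "F \<in> carrier_mat n n" and G: "G \<in> carrier_mat n n" and K: "K \<in> carrier_mat n n"
    and hF: "hurwitz F" and hG: "hurwitz G"
    and eq: "transpose_mat F * K + K * G = 0\<^sub>m n n"
  shows "K = 0\<^sub>m n n"
proof -
  have "transpose_mat (cmat F) * cmat K + cmat K * cmat G = 0\<^sub>m n n"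
    using arg_cong[OF eq, of cmat] F G K by (simp add: cmat_add[of _ n n] cmat_mult[of _ n n] cmat_transpose)
  then have XL: "transpose_mat (cmat F) * cmat K = cmat K * (- cmat G)"
    using F G K by (simp add: mat_eq_uminus_if_add_eq_zero[of _ n n])
  have "\<not> eigenvalue (- cmat G) l" if "eigenvalue (transpose_mat (cmat F)) l" for l
  proof
    assume "eigenvalue (- cmat G) l"
    then have "eigenvalue (cmat G) (- l)" using eigenvalue_uminus_mat[of "cmat G" n] G by simp
    then have "Re (- l) < 0" by (rule hurwitz_eigenvalue[OF hG])
    moreover have "Re l < 0" using hurwitz_transpose_eigenvalue[OF F hF that] .
    ultimately show False by simp
  qed
  then have "cmat K = cmat (0\<^sub>m n n)"
    using sylvester_zero[OF _ _ _ XL] F G K by simp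
  then show ?thesis by (rule cmat_inj)
qed

lemma outer_prod_carrier[simp]: "outer_prod a b \<in> carrier_mat (dim_vec a) (dim_vec b)"
  unfolding outer_prod_def by simp

lemma outer_prod_index[simp]:
  "i < dim_vec a \<Longrightarrow> k < dim_vec b \<Longrightarrow> outer_prod a b $$ (i, k) = a $ i * b $ k"
  unfolding outer_prod_def by simp

lemma outer_prod_dims[simp]:
  "dim_row (outer_prod a b) = dim_vec a" "dim_col (outer_prod a b) = dim_vec b"
  unfolding outer_prod_def by simp_all

lemma cmat_Re_outer_prod_perturbation_index:
  fixes H :: "real mat" and a b a' b' :: "complex vec"
  assumes H: "H \<in> carrier_mat N N" and a: "a \<in> carrier_vec N" and b: "b \<in> carrier_vec N"
    and a': "a' \<in> carrier_vec N" and b': "b' \<in> carrier_vec N" and i: "i < N" and k: "k < N"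
  shows "complex_of_real ((H + (2 * d) \<cdot>\<^sub>m map_mat Re (outer_prod a b + outer_prod a' b')) $$ (i, k))
    = complex_of_real (H $$ (i, k))
      + complex_of_real d * (a $ i * b $ k + a' $ i * b' $ k + cnj (a $ i * b $ k + a' $ i * b' $ k))"
proof -
  have Re2: "complex_of_real (2 * d * Re z) = complex_of_real d * (z + cnj z)" for z
    by (simp add: complex_add_cnj)
  have "(H + (2 * d) \<cdot>\<^sub>m map_mat Re (outer_prod a b + outer_prod a' b')) $$ (i, k)
    = H $$ (i, k) + 2 * d * Re (a $ i * b $ k + a' $ i * b' $ k)"
    using H a b a' b' i k by simp
  then show ?thesis unfolding Re2[symmetric] by simp
qed

lemma cmat_Re_outer_prod_perturbation_mult_vec:
  fixes H :: "real mat" and a b a' b' w :: "complex vec"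
  assumes H: "H \<in> carrier_mat N N" and a: "a \<in> carrier_vec N" and b: "b \<in> carrier_vec N"
    and a': "a' \<in> carrier_vec N" and b': "b' \<in> carrier_vec N" and w: "w \<in> carrier_vec N"
  shows "cmat (H + (2 * d) \<cdot>\<^sub>m map_mat Re (outer_prod a b + outer_prod a' b')) *\<^sub>v w
    = cmat H *\<^sub>v w + complex_of_real d \<cdot>\<^sub>v ((b \<bullet> w) \<cdot>\<^sub>v a + (b' \<bullet> w) \<cdot>\<^sub>v a'
       + (conjugate b \<bullet> w) \<cdot>\<^sub>v conjugate a + (conjugate b' \<bullet> w) \<cdot>\<^sub>v conjugate a')"
    (is "cmat ?K *\<^sub>v w = ?R")
proof (rule eq_vecI)
  have K: "?K \<in> carrier_mat N N"
    using H a b a' b' by (intro add_carrier_mat smult_carrier_mat) (auto simp: map_carrier_mat)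
  then show "dim_vec (cmat ?K *\<^sub>v w) = dim_vec ?R" using H a by simp
  fix i assume "i < dim_vec ?R"
  then have i: "i < N" using H a' by simp
  have entry: "complex_of_real (?K $$ (i, k)) * w $ k = complex_of_real (H $$ (i, k)) * w $ k
      + complex_of_real d * (a $ i * (b $ k * w $ k) + a' $ i * (b' $ k * w $ k)
        + cnj (a $ i) * (cnj (b $ k) * w $ k) + cnj (a' $ i) * (cnj (b' $ k) * w $ k))"
    if k: "k < N" for k
    using cmat_Re_outer_prod_perturbation_index[OF H a b a' b' i k] by (simp add: algebra_simps)
  have "(cmat ?K *\<^sub>v w) $ i = (\<Sum>k = 0..<N. complex_of_real (?K $$ (i, k)) * w $ k)"
    using i w by (intro cmat_mult_vec_index[of i ?K w, unfolded carrier_matD[OF K]]) auto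
  also have "\<dots> = (\<Sum>k = 0..<N. complex_of_real (H $$ (i, k)) * w $ k
      + complex_of_real d * (a $ i * (b $ k * w $ k) + a' $ i * (b' $ k * w $ k)
        + cnj (a $ i) * (cnj (b $ k) * w $ k) + cnj (a' $ i) * (cnj (b' $ k) * w $ k)))"
    by (rule sum.cong[OF refl]) (simp add: entry)
  also have "\<dots> = (\<Sum>k = 0..<N. complex_of_real (H $$ (i, k)) * w $ k) + complex_of_real d *
      (a $ i * (\<Sum>k = 0..<N. b $ k * w $ k) + a' $ i * (\<Sum>k = 0..<N. b' $ k * w $ k)
       + cnj (a $ i) * (\<Sum>k = 0..<N. cnj (b $ k) * w $ k)
       + cnj (a' $ i) * (\<Sum>k = 0..<N. cnj (b' $ k) * w $ k))"
    by (simp add: sum.distrib sum_distrib_left distrib_left)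
  also have "\<dots> = ?R $ i"
  proof -
    have "(cmat H *\<^sub>v w) $ i = (\<Sum>k = 0..<N. complex_of_real (H $$ (i, k)) * w $ k)"
      using i w by (intro cmat_mult_vec_index[of i H w, unfolded carrier_matD[OF H]]) auto
    moreover have "b \<bullet> w = (\<Sum>k = 0..<N. b $ k * w $ k)" "b' \<bullet> w = (\<Sum>k = 0..<N. b' $ k * w $ k)"
      "conjugate b \<bullet> w = (\<Sum>k = 0..<N. cnj (b $ k) * w $ k)"
      "conjugate b' \<bullet> w = (\<Sum>k = 0..<N. cnj (b' $ k) * w $ k)"
      unfolding scalar_prod_def using w b b' by (auto intro!: sum.cong)
    moreover have "?R $ i = (cmat H *\<^sub>v w) $ i + complex_of_real d * ((b \<bullet> w) * a $ i
       + (b' \<bullet> w) * a' $ i + (conjugate b \<bullet> w) * cnj (a $ i) + (conjugate b' \<bullet> w) * cnj (a' $ i))"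
      using H i a a' w by simp
    ultimately show ?thesis by (simp add: ac_simps)
  qed
  finally show "(cmat ?K *\<^sub>v w) $ i = ?R $ i" .
qed

section \<open>Symplectic structure and graph subspaces\<close>

lemma Jmat_dims[simp]: "dim_row (Jmat n) = n + n" "dim_col (Jmat n) = n + n"
  unfolding Jmat_def by auto

lemma Jmat_mult_carrier: "u \<in> carrier_vec (n + n) \<Longrightarrow> Jmat n *\<^sub>v u \<in> carrier_vec (n + n)"
  unfolding carrier_vec_def by simp

lemma Jmat_mult_append:
  assumes x: "x \<in> carrier_vec n" and y: "y \<in> carrier_vec n"
  shows "Jmat n *\<^sub>v (x @\<^sub>v y) = y @\<^sub>v (- x)"
proof -
  have "Jmat n *\<^sub>v (x @\<^sub>v y) = (0\<^sub>m n n *\<^sub>v x + 1\<^sub>m n *\<^sub>v y) @\<^sub>v ((- 1\<^sub>m n) *\<^sub>v x + 0\<^sub>m n n *\<^sub>v y)"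
    unfolding Jmat_def using x y by (intro four_block_mat_mult_vec) auto
  also have "\<dots> = y @\<^sub>v (- x)"
    using x y by (intro arg_cong2[of _ _ _ _ "(@\<^sub>v)"] eq_vecI) auto
  finally show ?thesis .
qed

lemma Jmat_index:
  assumes u: "u \<in> carrier_vec (n + n)" and k: "k < n + n"
  shows "(Jmat n *\<^sub>v u) $ k = (if k < n then u $ (k + n) else - u $ (k - n))"
proof -
  have "(Jmat n *\<^sub>v u) $ k = (vec_last u n @\<^sub>v (- vec_first u n)) $ k"
    using Jmat_mult_append[of "vec_first u n" n "vec_last u n"] u by simp
  then show ?thesis using k u unfolding vec_first_def vec_last_def by (auto simp: add.commute)
qed

lemma Jmat_smult: "u \<in> carrier_vec (n + n) \<Longrightarrow> Jmat n *\<^sub>v (c \<cdot>\<^sub>v u) = c \<cdot>\<^sub>v (Jmat n *\<^sub>v u)"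
  by (rule mult_mat_vec[of _ "n + n" "n + n"]) (auto simp: Jmat_def)

lemma Jmat_scalar_prod_antisym:
  assumes u: "u \<in> carrier_vec (n + n)" and w: "w \<in> carrier_vec (n + n)"
  shows "(Jmat n *\<^sub>v u) \<bullet> w = - (u \<bullet> (Jmat n *\<^sub>v w))"
proof -
  have split: "(\<Sum>k = 0..<n + n. f k) = (\<Sum>k = 0..<n. f k) + (\<Sum>k = 0..<n. f (k + n))"
    for f :: "nat \<Rightarrow> complex"
    using sum.atLeastLessThan_concat[of 0 n "n + n" f] sum.shift_bounds_nat_ivl[of f 0 n n] by simp
  have "(Jmat n *\<^sub>v u) \<bullet> w = (\<Sum>k = 0..<n + n. (Jmat n *\<^sub>v u) $ k * w $ k)"
    using w unfolding scalar_prod_def by simp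
  also have "\<dots> = (\<Sum>k = 0..<n. u $ (k + n) * w $ k) + (\<Sum>k = 0..<n. - u $ k * w $ (k + n))"
    unfolding split using u by (simp add: Jmat_index del: index_mult_mat_vec)
  also have "\<dots> = - ((\<Sum>k = 0..<n. u $ k * w $ (k + n)) + (\<Sum>k = 0..<n. - u $ (k + n) * w $ k))"
    by (simp add: sum_negf)
  also have "(\<Sum>k = 0..<n. u $ k * w $ (k + n)) + (\<Sum>k = 0..<n. - u $ (k + n) * w $ k)
    = (\<Sum>k = 0..<n + n. u $ k * (Jmat n *\<^sub>v w) $ k)"
    unfolding split using w by (simp add: Jmat_index del: index_mult_mat_vec)
  also have "\<dots> = u \<bullet> (Jmat n *\<^sub>v w)"
    using w unfolding scalar_prod_def by simp
  finally show ?thesis .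
qed

lemma Jmat_normalized_scalar_prods:
  assumes u: "u \<in> carrier_vec (n + n)" and w: "w \<in> carrier_vec (n + n)"
    and nz: "u \<bullet> (Jmat n *\<^sub>v w) \<noteq> 0" and \<theta>: "\<theta> = 1 / (u \<bullet> (Jmat n *\<^sub>v w))"
  shows "(\<theta> \<cdot>\<^sub>v (Jmat n *\<^sub>v w)) \<bullet> u = 1" and "(\<theta> \<cdot>\<^sub>v (Jmat n *\<^sub>v u)) \<bullet> w = - 1"
proof -
  have Ju: "Jmat n *\<^sub>v u \<in> carrier_vec (n + n)" and Jw: "Jmat n *\<^sub>v w \<in> carrier_vec (n + n)"
    using u w by (simp_all add: Jmat_mult_carrier)
  show "(\<theta> \<cdot>\<^sub>v (Jmat n *\<^sub>v w)) \<bullet> u = 1"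
    using comm_scalar_prod[OF Jw u] Jw u nz \<theta> by simp
  show "(\<theta> \<cdot>\<^sub>v (Jmat n *\<^sub>v u)) \<bullet> w = - 1"
    using Jmat_scalar_prod_antisym[OF u w] Ju w nz \<theta> by simp
qed

lemma hamiltonian_dims[simp]:
  "dim_row (hamiltonian A D Q) = dim_row A + dim_col A"
  "dim_col (hamiltonian A D Q) = dim_col A + dim_row A"
  unfolding hamiltonian_def by simp_all

lemma hamiltonian_if_blocks_symmetric:
  fixes K :: "real mat"
  assumes K: "K \<in> carrier_mat (n + n) (n + n)"
    and upper: "\<And>i j. i < n \<Longrightarrow> j < n \<Longrightarrow> K $$ (i, n + j) = K $$ (j, n + i)"
    and lower: "\<And>i j. i < n \<Longrightarrow> j < n \<Longrightarrow> K $$ (n + i, j) = K $$ (n + j, i)"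
    and diag: "\<And>i j. i < n \<Longrightarrow> j < n \<Longrightarrow> K $$ (n + i, n + j) = - K $$ (j, i)"
  shows "\<exists>At Qt Dt. At \<in> carrier_mat n n \<and> Qt \<in> carrier_mat n n \<and> Dt \<in> carrier_mat n n \<and>
    transpose_mat Qt = Qt \<and> transpose_mat Dt = Dt \<and> K = hamiltonian At Dt Qt"
proof -
  define At Dt Qt where "At = mat n n (\<lambda>(i, j). K $$ (i, j))"
    and "Dt = mat n n (\<lambda>(i, j). - K $$ (i, n + j))"
    and "Qt = mat n n (\<lambda>(i, j). - K $$ (n + i, j))"
  have c: "At \<in> carrier_mat n n" "Qt \<in> carrier_mat n n" "Dt \<in> carrier_mat n n"
    unfolding At_def Dt_def Qt_def by auto
  have "transpose_mat Qt = Qt" unfolding Qt_def by (rule eq_matI) (auto simp: lower)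
  moreover have "transpose_mat Dt = Dt" unfolding Dt_def by (rule eq_matI) (auto simp: upper)
  moreover have "K = hamiltonian At Dt Qt"
  proof (rule eq_matI)
    fix i j assume "i < dim_row (hamiltonian At Dt Qt)" "j < dim_col (hamiltonian At Dt Qt)"
    then have i: "i < n + n" and j: "j < n + n" using c by (auto simp: hamiltonian_def)
    consider "i < n" "j < n" | "i < n" "n \<le> j" | "n \<le> i" "j < n" | "n \<le> i" "n \<le> j" by linarith
    then show "K $$ (i, j) = hamiltonian At Dt Qt $$ (i, j)"
    proof cases
      case 4
      then obtain i' j' where "i = n + i'" "j = n + j'" "i' < n" "j' < n"
        using i j by (metis add_less_cancel_left le_add_diff_inverse)
      then show ?thesis using diag[of i' j'] unfolding hamiltonian_def At_def Dt_def Qt_def by simp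
    qed (use i j in \<open>auto simp: hamiltonian_def At_def Dt_def Qt_def\<close>)
  qed (use K c in \<open>auto simp: hamiltonian_def\<close>)
  ultimately show ?thesis using c by blast
qed

definition graph_vec :: "real mat \<Rightarrow> complex vec \<Rightarrow> complex vec" where
  "graph_vec P x = x @\<^sub>v (cmat P *\<^sub>v x)"

lemma graph_vec_carrier[simp]:
  "P \<in> carrier_mat n n \<Longrightarrow> x \<in> carrier_vec n \<Longrightarrow> graph_vec P x \<in> carrier_vec (n + n)"
  unfolding graph_vec_def by simp

lemma graph_vec_add:
  "P \<in> carrier_mat n n \<Longrightarrow> x \<in> carrier_vec n \<Longrightarrow> y \<in> carrier_vec n \<Longrightarrow>
    graph_vec P (x + y) = graph_vec P x + graph_vec P y"
  unfolding graph_vec_def by (simp add: append_vec_add[of _ n _ _ n] mult_add_distrib_mat_vec[of _ n n])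

lemma graph_vec_smult:
  "P \<in> carrier_mat n n \<Longrightarrow> x \<in> carrier_vec n \<Longrightarrow> graph_vec P (c \<cdot>\<^sub>v x) = c \<cdot>\<^sub>v graph_vec P x"
  unfolding graph_vec_def by (intro eq_vecI) (auto simp: mult_mat_vec[of _ n n])

lemma graph_vec_inj:
  "P \<in> carrier_mat n n \<Longrightarrow> x \<in> carrier_vec n \<Longrightarrow> y \<in> carrier_vec n \<Longrightarrow>
    graph_vec P x = graph_vec P y \<Longrightarrow> x = y"
  unfolding graph_vec_def using append_vec_eq[of x n y] by auto

lemma graph_vec_eq_zero_iff:
  assumes P: "P \<in> carrier_mat n n" and x: "x \<in> carrier_vec n"
  shows "graph_vec P x = 0\<^sub>v (n + n) \<longleftrightarrow> x = 0\<^sub>v n"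
proof
  assume g: "graph_vec P x = 0\<^sub>v (n + n)"
  show "x = 0\<^sub>v n"
  proof (rule eq_vecI)
    fix i assume "i < dim_vec (0\<^sub>v n :: complex vec)"
    then have i: "i < n" by simp
    have "graph_vec P x $ i = 0" using g i by simp
    then show "x $ i = 0\<^sub>v n $ i" using x i unfolding graph_vec_def by simp
  qed (use x in simp)
next
  assume "x = 0\<^sub>v n"
  then show "graph_vec P x = 0\<^sub>v (n + n)"
    using P unfolding graph_vec_def by (intro eq_vecI) (auto simp: scalar_prod_def)
qed

lemma graph_vec_scalar_prod:
  assumes P: "P \<in> carrier_mat n n" and b: "b \<in> carrier_vec (n + n)" and y: "y \<in> carrier_vec n"
  shows "b \<bullet> graph_vec P y = (vec_first b n + transpose_mat (cmat P) *\<^sub>v vec_last b n) \<bullet> y"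
proof -
  have "b \<bullet> graph_vec P y = (vec_first b n @\<^sub>v vec_last b n) \<bullet> (y @\<^sub>v (cmat P *\<^sub>v y))"
    unfolding graph_vec_def using b by simp
  also have "\<dots> = vec_first b n \<bullet> y + vec_last b n \<bullet> (cmat P *\<^sub>v y)"
    using P y by (intro scalar_prod_append[of _ n _ n]) auto
  also have "vec_last b n \<bullet> (cmat P *\<^sub>v y) = (transpose_mat (cmat P) *\<^sub>v vec_last b n) \<bullet> y"
    using transpose_vec_mult_scalar[of "cmat P" n n y "vec_last b n"] P y by simp
  finally show ?thesis using P y by (simp add: add_scalar_prod_distrib[of _ n])
qed

lemma conjugate_graph_vec:
  "P \<in> carrier_mat n n \<Longrightarrow> x \<in> carrier_vec n \<Longrightarrow> conjugate (graph_vec P x) = graph_vec P (conjugate x)"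
  unfolding graph_vec_def conjugate_append_vec by (simp add: cmat_mult_vec_conjugate)

section \<open>Riccati equations and the Hamiltonian matrix\<close>

locale riccati_data =
  fixes n :: nat and A Q D :: "real mat"
  assumes A_carrier: "A \<in> carrier_mat n n"
    and Q_carrier: "Q \<in> carrier_mat n n"
    and D_carrier: "D \<in> carrier_mat n n"
    and Q_symmetric: "transpose_mat Q = Q"
    and D_symmetric: "transpose_mat D = D"
begin

lemmas carriers = A_carrier Q_carrier D_carrier

lemmas dims[simp] = carrier_matD[OF A_carrier] carrier_matD[OF Q_carrier] carrier_matD[OF D_carrier]

lemma are_solution_difference:
  assumes X1: "are_solution n A Q D X1" and X2: "are_solution n A Q D X2"
  shows "(transpose_mat A - X1 * D) * (X1 - X2) + (X1 - X2) * (A - D * X2) = 0\<^sub>m n n"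
proof (rule mat_eq_if_mult_vec_eq)
  have X1c: "X1 \<in> carrier_mat n n" and X2c: "X2 \<in> carrier_mat n n"
    using X1 X2 unfolding are_solution_def by auto
  then show "(transpose_mat A - X1 * D) * (X1 - X2) + (X1 - X2) * (A - D * X2) \<in> carrier_mat n n"
    by auto
  fix w :: "real vec" assume w: "w \<in> carrier_vec n"
  have cm: "M \<in> carrier_mat n n \<Longrightarrow> N \<in> carrier_mat n n \<Longrightarrow> M * N \<in> carrier_mat n n"
    "M \<in> carrier_mat n n \<Longrightarrow> N \<in> carrier_mat n n \<Longrightarrow> M + N \<in> carrier_mat n n"
    "M \<in> carrier_mat n n \<Longrightarrow> N \<in> carrier_mat n n \<Longrightarrow> M - N \<in> carrier_mat n n"
    "M \<in> carrier_mat n n \<Longrightarrow> v \<in> carrier_vec n \<Longrightarrow> M *\<^sub>v v \<in> carrier_vec n"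
    for M N :: "real mat" and v by auto
  show "((transpose_mat A - X1 * D) * (X1 - X2) + (X1 - X2) * (A - D * X2)) *\<^sub>v w = 0\<^sub>m n n *\<^sub>v w"
  proof (rule eq_vecI)
    fix i assume "i < dim_vec (0\<^sub>m n n *\<^sub>v w)"
    then have i: "i < n" by simp
    have "((transpose_mat A * X1 + X1 * A + Q - X1 * D * X1) *\<^sub>v w) $ i = 0"
      "((transpose_mat A * X2 + X2 * A + Q - X2 * D * X2) *\<^sub>v w) $ i = 0"
      using X1 X2 i w unfolding are_solution_def by simp_all
    moreover have "(0\<^sub>m n n *\<^sub>v w) $ i = 0" using i w by simp
    ultimately    show "(((transpose_mat A - X1 * D) * (X1 - X2) + (X1 - X2) * (A - D * X2)) *\<^sub>v w) $ i
      = (0\<^sub>m n n *\<^sub>v w) $ i"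
      using carriers X1c X2c w i
      by (simp add: cm add_mult_distrib_mat_vec[of _ n n] minus_mult_distrib_mat_vec[of _ n n]
          mult_minus_distrib_mat_vec[of _ n n] mult_add_distrib_mat_vec[of _ n n]
          assoc_mult_mat_vec[of _ n n _ n] del: index_mult_mat_vec)
  qed (use X1c X2c in auto)
qed auto

lemma are_solution_transpose:
  assumes sol: "are_solution n A Q D X"
  shows "are_solution n A Q D (transpose_mat X)"
proof -
  have X: "X \<in> carrier_mat n n" and R: "transpose_mat A * X + X * A + Q - X * D * X = 0\<^sub>m n n"
    using sol unfolding are_solution_def by auto
  have Xt: "transpose_mat X \<in> carrier_mat n n" using X by simp
  have c: "transpose_mat A * X \<in> carrier_mat n n" "X * A \<in> carrier_mat n n" "X * D * X \<in> carrier_mat n n"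
    "transpose_mat A * X + X * A \<in> carrier_mat n n" "transpose_mat A * X + X * A + Q \<in> carrier_mat n n"
    using X carriers by auto
  have T1: "transpose_mat (transpose_mat A * X) = transpose_mat X * A"
    using transpose_mult[of "transpose_mat A" n n X] X A_carrier by simp
  have T2: "transpose_mat (X * A) = transpose_mat A * transpose_mat X"
    using transpose_mult[OF X A_carrier] .
  have T3: "transpose_mat (X * D * X) = transpose_mat X * D * transpose_mat X"
    using transpose_mult[OF mult_carrier_mat[OF X D_carrier] X] transpose_mult[OF X D_carrier]
      assoc_mult_mat[OF Xt D_carrier Xt] by (simp add: D_symmetric)
  have "transpose_mat (transpose_mat A * X + X * A + Q - X * D * X)
     = transpose_mat X * A + transpose_mat A * transpose_mat X + Q - transpose_mat X * D * transpose_mat X"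
    by (simp add: transpose_minus[OF c(5) c(3)] transpose_add[OF c(4) Q_carrier]
        transpose_add[OF c(1) c(2)] T1 T2 T3 Q_symmetric)
  also have "transpose_mat X * A + transpose_mat A * transpose_mat X
    = transpose_mat A * transpose_mat X + transpose_mat X * A"
    using Xt by (intro comm_add_mat[of _ n n]) auto
  finally show ?thesis using R Xt unfolding are_solution_def by simp
qed

lemma stabilizing_solution_symmetric:
  assumes st: "stabilizing_solution n A Q D X"
  shows "transpose_mat X = X"
proof -
  have sol: "are_solution n A Q D X" and h: "hurwitz (A - D * X)"
    using st unfolding stabilizing_solution_def by auto
  have X: "X \<in> carrier_mat n n" using sol unfolding are_solution_def by auto
  have "transpose_mat (A - D * X) = transpose_mat A - transpose_mat X * D"
    using transpose_minus[OF A_carrier mult_carrier_mat[OF D_carrier X]] transpose_mult[OF D_carrier X]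
    by (simp add: D_symmetric)
  then have "transpose_mat (A - D * X) * (transpose_mat X - X) + (transpose_mat X - X) * (A - D * X)
    = 0\<^sub>m n n"
    using are_solution_difference[OF are_solution_transpose[OF sol] sol] by simp
  moreover have "A - D * X \<in> carrier_mat n n" "transpose_mat X - X \<in> carrier_mat n n"
    using X by auto
  ultimately have diff: "transpose_mat X - X = 0\<^sub>m n n"
    using hurwitz_sylvester_zero[OF _ _ _ h h] by blast
  show ?thesis using mat_eq_if_minus_eq_zero[OF _ X diff] X by simp
qed

lemma stabilizing_solution_unique:
  assumes st1: "stabilizing_solution n A Q D X1" and st2: "stabilizing_solution n A Q D X2"
  shows "X1 = X2"
proof -
  have sol1: "are_solution n A Q D X1" and h1: "hurwitz (A - D * X1)"
    and sol2: "are_solution n A Q D X2" and h2: "hurwitz (A - D * X2)"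
    using st1 st2 unfolding stabilizing_solution_def by auto
  have X1: "X1 \<in> carrier_mat n n" and X2: "X2 \<in> carrier_mat n n"
    using sol1 sol2 unfolding are_solution_def by auto
  have "transpose_mat (A - D * X1) = transpose_mat A - X1 * D"
    using transpose_minus[OF A_carrier mult_carrier_mat[OF D_carrier X1]] transpose_mult[OF D_carrier X1]
      stabilizing_solution_symmetric[OF st1] by (simp add: D_symmetric)
  then have "transpose_mat (A - D * X1) * (X1 - X2) + (X1 - X2) * (A - D * X2) = 0\<^sub>m n n"
    using are_solution_difference[OF sol1 sol2] by simp
  moreover have "A - D * X1 \<in> carrier_mat n n" "A - D * X2 \<in> carrier_mat n n"
    "X1 - X2 \<in> carrier_mat n n"
    using X1 X2 by auto
  ultimately have diff: "X1 - X2 = 0\<^sub>m n n"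
    using hurwitz_sylvester_zero[OF _ _ _ h1 h2] by blast
  show ?thesis by (rule mat_eq_if_minus_eq_zero[OF X1 X2 diff])
qed

abbreviation Hc :: "complex mat" where
  "Hc \<equiv> cmat (hamiltonian A D Q)"

lemma hamiltonian_carrier[simp]: "hamiltonian A D Q \<in> carrier_mat (n + n) (n + n)"
  using carriers unfolding hamiltonian_def by simp

lemma Hc_carrier[simp]: "Hc \<in> carrier_mat (n + n) (n + n)"
  by simp

lemma Hc_four_block:
  "Hc = four_block_mat (cmat A) (- cmat D) (- cmat Q) (- transpose_mat (cmat A))"
  unfolding hamiltonian_def cmat_def using carriers by (intro eq_matI) auto

lemma Hc_mult_append:
  assumes x: "x \<in> carrier_vec n" and y: "y \<in> carrier_vec n"
  shows "Hc *\<^sub>v (x @\<^sub>v y) =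
    (cmat A *\<^sub>v x - cmat D *\<^sub>v y) @\<^sub>v (- (cmat Q *\<^sub>v x) - transpose_mat (cmat A) *\<^sub>v y)"
proof -
  have "Hc *\<^sub>v (x @\<^sub>v y) =
    (cmat A *\<^sub>v x + (- cmat D) *\<^sub>v y) @\<^sub>v ((- cmat Q) *\<^sub>v x + (- transpose_mat (cmat A)) *\<^sub>v y)"
    unfolding Hc_four_block using carriers x y by (intro four_block_mat_mult_vec) auto
  also have "\<dots> = (cmat A *\<^sub>v x - cmat D *\<^sub>v y) @\<^sub>v (- (cmat Q *\<^sub>v x) - transpose_mat (cmat A) *\<^sub>v y)"
    using carriers x y by (intro arg_cong2[of _ _ _ _ "(@\<^sub>v)"] eq_vecI) auto
  finally show ?thesis .
qed

lemma transpose_Hc_mult_Jmat: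
  assumes u: "u \<in> carrier_vec (n + n)"
  shows "transpose_mat Hc *\<^sub>v (Jmat n *\<^sub>v u) = - (Jmat n *\<^sub>v (Hc *\<^sub>v u))"
proof -
  define u1 u2 where "u1 = vec_first u n" and "u2 = vec_last u n"
  have u1: "u1 \<in> carrier_vec n" and u2: "u2 \<in> carrier_vec n" unfolding u1_def u2_def by auto
  have u12: "u = u1 @\<^sub>v u2" unfolding u1_def u2_def using u by simp
  have HT: "transpose_mat Hc = four_block_mat (transpose_mat (cmat A)) (- cmat Q) (- cmat D) (- cmat A)"
    unfolding Hc_four_block
    using carriers by (subst transpose_four_block_mat[of _ n n _ n])
      (auto simp: transpose_uminus Q_symmetric D_symmetric simp flip: cmat_transpose)
  have "transpose_mat Hc *\<^sub>v (Jmat n *\<^sub>v u) =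
     (transpose_mat (cmat A) *\<^sub>v u2 + (- cmat Q) *\<^sub>v (- u1)) @\<^sub>v ((- cmat D) *\<^sub>v u2 + (- cmat A) *\<^sub>v (- u1))"
    unfolding HT u12 Jmat_mult_append[OF u1 u2] using carriers u1 u2 by (intro four_block_mat_mult_vec) auto
  also have "\<dots> = - (Jmat n *\<^sub>v (Hc *\<^sub>v u))"
  proof -
    have c1: "cmat A *\<^sub>v u1 - cmat D *\<^sub>v u2 \<in> carrier_vec n"
      and c2: "- (cmat Q *\<^sub>v u1) - transpose_mat (cmat A) *\<^sub>v u2 \<in> carrier_vec n"
      using carriers u1 u2 by auto
    show ?thesis
      unfolding u12 Hc_mult_append[OF u1 u2] Jmat_mult_append[OF c1 c2]
      using carriers u1 u2 by (intro eq_vecI) auto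
  qed
  finally show ?thesis .
qed

lemma transpose_Hc_Jmat_eigen:
  assumes v: "v \<in> carrier_vec (n + n)" and ev: "Hc *\<^sub>v v = l \<cdot>\<^sub>v v"
  shows "transpose_mat Hc *\<^sub>v (Jmat n *\<^sub>v v) = (- l) \<cdot>\<^sub>v (Jmat n *\<^sub>v v)"
  using transpose_Hc_mult_Jmat[OF v] Jmat_smult[OF v] v unfolding ev by (auto intro!: eq_vecI)

text \<open>The perturbation is Hamiltonian because it equals $\theta\,(u v^T + v u^T) J^T$ and
  $J\,(u v^T + v u^T)\,J^T$ is symmetric; the proof checks this entrywise.\<close>

lemma Jmat_perturbation_hamiltonian:
  assumes u: "u \<in> carrier_vec (n + n)" and v: "v \<in> carrier_vec (n + n)"
  shows "\<exists>At Qt Dt. At \<in> carrier_mat n n \<and> Qt \<in> carrier_mat n n \<and> Dt \<in> carrier_mat n n \<and>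
    transpose_mat Qt = Qt \<and> transpose_mat Dt = Dt \<and>
    hamiltonian A D Q + (2 * d) \<cdot>\<^sub>m map_mat Re (outer_prod u (\<theta> \<cdot>\<^sub>v (Jmat n *\<^sub>v v))
      + outer_prod v (\<theta> \<cdot>\<^sub>v (Jmat n *\<^sub>v u))) = hamiltonian At Dt Qt"
proof -
  let ?E = "outer_prod u (\<theta> \<cdot>\<^sub>v (Jmat n *\<^sub>v v)) + outer_prod v (\<theta> \<cdot>\<^sub>v (Jmat n *\<^sub>v u))"
  let ?K = "hamiltonian A D Q + (2 * d) \<cdot>\<^sub>m map_mat Re ?E"
  have E: "?E \<in> carrier_mat (n + n) (n + n)"
    using u v Jmat_mult_carrier[OF u] Jmat_mult_carrier[OF v] by (intro add_carrier_mat) auto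
  have H: "hamiltonian A D Q \<in> carrier_mat (n + n) (n + n)"
    using carriers unfolding hamiltonian_def by simp
  have K: "?K \<in> carrier_mat (n + n) (n + n)"
    using E H by (intro add_carrier_mat smult_carrier_mat) (auto simp: map_carrier_mat)
  have entry: "?K $$ (i, k) = hamiltonian A D Q $$ (i, k)
      + 2 * d * Re (u $ i * (\<theta> * (Jmat n *\<^sub>v v) $ k) + v $ i * (\<theta> * (Jmat n *\<^sub>v u) $ k))"
    if "i < n + n" "k < n + n" for i k
    using that E H u v by simp
  have Hent: "hamiltonian A D Q $$ (i, k) = (if i < n then if k < n then A $$ (i, k) else - D $$ (i, k - n)
      else if k < n then - Q $$ (i - n, k) else - A $$ (k - n, i - n))"
    if "i < n + n" "k < n + n" for i k
    using that carriers unfolding hamiltonian_def by simp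
  have Qe: "Q $$ (i, j) = Q $$ (j, i)" and De: "D $$ (i, j) = D $$ (j, i)" if "i < n" "j < n" for i j
    using arg_cong[OF Q_symmetric, of "\<lambda>M. M $$ (i, j)"] arg_cong[OF D_symmetric, of "\<lambda>M. M $$ (i, j)"]
      that carriers by simp_all
  note Jv = Jmat_index[OF v] and Ju = Jmat_index[OF u]
  show ?thesis
  proof (rule hamiltonian_if_blocks_symmetric[OF K])
    fix i j assume i: "i < n" and j: "j < n"
    then have ij: "i < n + n" "j < n + n" "n + i < n + n" "n + j < n + n" by auto
    show "?K $$ (i, n + j) = ?K $$ (j, n + i)"
      unfolding entry[OF ij(1,4)] entry[OF ij(2,3)] using i j
      by (simp add: Jv Ju Hent De algebra_simps del: index_mult_mat_vec)
    show "?K $$ (n + i, j) = ?K $$ (n + j, i)"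
      unfolding entry[OF ij(3,2)] entry[OF ij(4,1)] using i j
      by (simp add: Jv Ju Hent Qe algebra_simps del: index_mult_mat_vec)
    show "?K $$ (n + i, n + j) = - ?K $$ (j, i)"
      unfolding entry[OF ij(3,4)] entry[OF ij(2,1)] using i j
      by (simp add: Jv Ju Hent algebra_simps del: index_mult_mat_vec)
  qed
qed

lemma Jmat_left_eigenvector:
  assumes v: "v \<in> carrier_vec (n + n)" and ev: "Hc *\<^sub>v v = l \<cdot>\<^sub>v v"
  shows "transpose_mat Hc *\<^sub>v (\<theta> \<cdot>\<^sub>v (Jmat n *\<^sub>v v)) = (- l) \<cdot>\<^sub>v (\<theta> \<cdot>\<^sub>v (Jmat n *\<^sub>v v))"
proof -
  have Jv: "Jmat n *\<^sub>v v \<in> carrier_vec (n + n)" using v by (rule Jmat_mult_carrier)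
  have "transpose_mat Hc *\<^sub>v (\<theta> \<cdot>\<^sub>v (Jmat n *\<^sub>v v)) = \<theta> \<cdot>\<^sub>v (transpose_mat Hc *\<^sub>v (Jmat n *\<^sub>v v))"
    using Jv by (intro mult_mat_vec[of _ "n + n" "n + n"]) simp_all
  also have "\<dots> = (- l) \<cdot>\<^sub>v (\<theta> \<cdot>\<^sub>v (Jmat n *\<^sub>v v))"
    unfolding transpose_Hc_Jmat_eigen[OF v ev] by (simp add: smult_smult_assoc ac_simps)
  finally show ?thesis .
qed

lemma Hc_mult_append_eq_smult_iff:
  assumes x: "x \<in> carrier_vec n" and y: "y \<in> carrier_vec n"
  shows "Hc *\<^sub>v (x @\<^sub>v y) = \<nu> \<cdot>\<^sub>v (x @\<^sub>v y) \<longleftrightarrow>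
    cmat A *\<^sub>v x - cmat D *\<^sub>v y = \<nu> \<cdot>\<^sub>v x \<and> - (cmat Q *\<^sub>v x) - transpose_mat (cmat A) *\<^sub>v y = \<nu> \<cdot>\<^sub>v y"
  unfolding Hc_mult_append[OF x y] smult_append_vec
  using carriers x y by (intro append_vec_eq) auto

lemma cmat_riccati_residual:
  assumes X: "X \<in> carrier_mat n n"
  shows "cmat (transpose_mat A * X + X * A + Q - X * D * X)
    = transpose_mat (cmat A) * cmat X + cmat X * cmat A + cmat Q - cmat X * cmat D * cmat X"
  using carriers X by (simp add: cmat_add[of _ n n] cmat_minus[of _ n n] cmat_mult[of _ n n _ n] cmat_transpose)

lemma are_solution_mult_vec_index:
  assumes sol: "are_solution n A Q D X" and x: "x \<in> carrier_vec n" and i: "i < n"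
  shows "(transpose_mat (cmat A) *\<^sub>v (cmat X *\<^sub>v x)) $ i + (cmat X *\<^sub>v (cmat A *\<^sub>v x)) $ i
    + (cmat Q *\<^sub>v x) $ i - (cmat X *\<^sub>v (cmat D *\<^sub>v (cmat X *\<^sub>v x))) $ i = 0"
proof -
  have X: "X \<in> carrier_mat n n" and R: "transpose_mat A * X + X * A + Q - X * D * X = 0\<^sub>m n n"
    using sol unfolding are_solution_def by auto
  have "transpose_mat (cmat A) * cmat X + cmat X * cmat A + cmat Q - cmat X * cmat D * cmat X = 0\<^sub>m n n"
    using arg_cong[OF R, of cmat] unfolding cmat_riccati_residual[OF X] by simp
  then have "((transpose_mat (cmat A) * cmat X + cmat X * cmat A + cmat Q - cmat X * cmat D * cmat X)
    *\<^sub>v x) $ i = 0"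
    using x i by simp
  then show ?thesis
    using carriers X x i
    by (simp add: add_mult_distrib_mat_vec[of _ n n] minus_mult_distrib_mat_vec[of _ n n]
        assoc_mult_mat_vec[of _ n n _ n] del: index_mult_mat_vec)
qed

lemma Hc_mult_graph_vec:
  assumes sol: "are_solution n A Q D X" and x: "x \<in> carrier_vec n"
  shows "Hc *\<^sub>v graph_vec X x = graph_vec X (cmat (A - D * X) *\<^sub>v x)"
proof -
  have X: "X \<in> carrier_mat n n" using sol unfolding are_solution_def by auto
  have cM: "cmat (A - D * X) = cmat A - cmat D * cmat X"
    using carriers X by (simp add: cmat_minus[of _ n n] cmat_mult[of _ n n _ n])
  have Xx: "cmat X *\<^sub>v x \<in> carrier_vec n" using X x by simp
  show ?thesis
    unfolding graph_vec_def Hc_mult_append[OF x Xx] cM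
  proof (rule arg_cong2[of _ _ _ _ "(@\<^sub>v)"])
    show "cmat A *\<^sub>v x - cmat D *\<^sub>v (cmat X *\<^sub>v x) = (cmat A - cmat D * cmat X) *\<^sub>v x"
      using carriers X x
      by (intro eq_vecI) (auto simp: minus_mult_distrib_mat_vec[of _ n n] assoc_mult_mat_vec[of _ n n _ n]
          simp del: index_mult_mat_vec)
    show "- (cmat Q *\<^sub>v x) - transpose_mat (cmat A) *\<^sub>v (cmat X *\<^sub>v x) =
      cmat X *\<^sub>v ((cmat A - cmat D * cmat X) *\<^sub>v x)"
    proof (rule eq_vecI)
      fix i assume "i < dim_vec (cmat X *\<^sub>v ((cmat A - cmat D * cmat X) *\<^sub>v x))"
      then have i: "i < n" using X by simp
      from are_solution_mult_vec_index[OF sol x i]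
      show "(- (cmat Q *\<^sub>v x) - transpose_mat (cmat A) *\<^sub>v (cmat X *\<^sub>v x)) $ i =
        (cmat X *\<^sub>v ((cmat A - cmat D * cmat X) *\<^sub>v x)) $ i"
        using carriers X x i
        by (simp add: minus_mult_distrib_mat_vec[of _ n n] mult_minus_distrib_mat_vec[of _ n n]
            assoc_mult_mat_vec[of _ n n _ n] del: index_mult_mat_vec) (simp add: algebra_simps)
    qed (use carriers X x in auto)
  qed
qed

lemma are_solution_if_graph_invariant:
  assumes X: "X \<in> carrier_mat n n"
    and inv: "\<And>x. x \<in> carrier_vec n \<Longrightarrow> \<exists>y \<in> carrier_vec n. Hc *\<^sub>v graph_vec X x = graph_vec X y"
  shows "are_solution n A Q D X"
proof -
  let ?R = "transpose_mat (cmat A) * cmat X + cmat X * cmat A + cmat Q - cmat X * cmat D * cmat X"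
  have R: "?R \<in> carrier_mat n n"
    using carriers X unfolding carrier_mat_def by simp
  have "?R = 0\<^sub>m n n"
  proof (rule mat_eq_if_mult_vec_eq[OF R])
    fix x :: "complex vec" assume x: "x \<in> carrier_vec n"
    have Xx: "cmat X *\<^sub>v x \<in> carrier_vec n" using X x by simp
    obtain y where y: "y \<in> carrier_vec n" and e: "Hc *\<^sub>v graph_vec X x = graph_vec X y"
      using inv[OF x] by blast
    have "cmat A *\<^sub>v x - cmat D *\<^sub>v (cmat X *\<^sub>v x) \<in> carrier_vec n" using carriers X x by simp
    then have e1: "cmat A *\<^sub>v x - cmat D *\<^sub>v (cmat X *\<^sub>v x) = y"
      and e2: "- (cmat Q *\<^sub>v x) - transpose_mat (cmat A) *\<^sub>v (cmat X *\<^sub>v x) = cmat X *\<^sub>v y"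
      using e y unfolding graph_vec_def Hc_mult_append[OF x Xx] by (simp_all add: append_vec_eq)
    show "?R *\<^sub>v x = 0\<^sub>m n n *\<^sub>v x"
    proof (rule eq_vecI)
      fix i assume "i < dim_vec (0\<^sub>m n n *\<^sub>v x)"
      then have i: "i < n" by simp
      have "(- (cmat Q *\<^sub>v x) - transpose_mat (cmat A) *\<^sub>v (cmat X *\<^sub>v x)) $ i
         = (cmat X *\<^sub>v (cmat A *\<^sub>v x - cmat D *\<^sub>v (cmat X *\<^sub>v x))) $ i"
        using e1 e2 by simp
      moreover have "(0\<^sub>m n n *\<^sub>v x) $ i = 0" using i x by simp
      ultimately show "(?R *\<^sub>v x) $ i = (0\<^sub>m n n *\<^sub>v x) $ i"
        using carriers X x i
        by (simp add: minus_mult_distrib_mat_vec[of _ n n] mult_minus_distrib_mat_vec[of _ n n]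
            add_mult_distrib_mat_vec[of _ n n] assoc_mult_mat_vec[of _ n n _ n] del: index_mult_mat_vec)
          (simp add: algebra_simps)
    qed (use R in auto)
  qed (use X in auto)
  then have "cmat (transpose_mat A * X + X * A + Q - X * D * X) = cmat (0\<^sub>m n n)"
    using cmat_riccati_residual[OF X] by simp
  then show ?thesis using X cmat_inj unfolding are_solution_def by blast
qed

end

locale stabilizing_riccati = riccati_data +
  fixes P :: "real mat"
  assumes P_stabilizing: "stabilizing_solution n A Q D P"
begin

lemma P_solution: "are_solution n A Q D P"
  and P_hurwitz: "hurwitz (A - D * P)"
  using P_stabilizing unfolding stabilizing_solution_def by auto

lemma P_carrier: "P \<in> carrier_mat n n"
  using P_solution unfolding are_solution_def by auto

lemmas P_dims[simp] = carrier_matD[OF P_carrier]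

lemma closed_loop_carrier: "A - D * P \<in> carrier_mat n n"
  using minus_carrier_mat[OF mult_carrier_mat[OF D_carrier P_carrier]] .

lemma transpose_closed_loop:
  "transpose_mat (cmat (A - D * P)) = transpose_mat (cmat A) - cmat P * cmat D"
proof -
  have "transpose_mat (A - D * P) = transpose_mat A - P * D"
    using transpose_minus[OF A_carrier mult_carrier_mat[OF D_carrier P_carrier]]
      transpose_mult[OF D_carrier P_carrier]
    by (simp add: D_symmetric stabilizing_solution_symmetric[OF P_stabilizing])
  then have "transpose_mat (cmat (A - D * P)) = cmat (transpose_mat A - P * D)"
    by (simp flip: cmat_transpose)
  also have "\<dots> = transpose_mat (cmat A) - cmat P * cmat D"
    using carriers P_carrier by (simp add: cmat_minus[of _ n n] cmat_mult[of _ n n _ n] cmat_transpose)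
  finally show ?thesis .
qed

lemma graph_defect_eigenvector:
  assumes x: "x \<in> carrier_vec n" and y: "y \<in> carrier_vec n"
    and ev: "Hc *\<^sub>v (x @\<^sub>v y) = \<nu> \<cdot>\<^sub>v (x @\<^sub>v y)"
  shows "transpose_mat (cmat (A - D * P)) *\<^sub>v (y - cmat P *\<^sub>v x) = (- \<nu>) \<cdot>\<^sub>v (y - cmat P *\<^sub>v x)"
proof -
  have e1: "cmat A *\<^sub>v x - cmat D *\<^sub>v y = \<nu> \<cdot>\<^sub>v x"
    and e2: "- (cmat Q *\<^sub>v x) - transpose_mat (cmat A) *\<^sub>v y = \<nu> \<cdot>\<^sub>v y"
    using ev Hc_mult_append_eq_smult_iff[OF x y] by auto
  have P: "P \<in> carrier_mat n n" by (rule P_carrier)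
  have linear: "aty - pdy - atpx + pdpx = - \<nu> * (yi - px)"
    if "pa - pdy = \<nu> * px" "- qx - aty = \<nu> * yi" "atpx + pa + qx = pdpx"
    for pa pdy px qx aty yi atpx pdpx :: complex
  proof -
    have "aty - pdy - atpx + pdpx = (pa - pdy) - (- qx - aty)"
      unfolding that(3)[symmetric] by (simp add: algebra_simps)
    also have "\<dots> = - \<nu> * (yi - px)"
      unfolding that(1,2) by (simp add: algebra_simps)
    finally show ?thesis .
  qed
  show ?thesis
  proof (rule eq_vecI)
    fix i assume "i < dim_vec ((- \<nu>) \<cdot>\<^sub>v (y - cmat P *\<^sub>v x))"
    then have i: "i < n" using y by simp
    let ?pa = "(cmat P *\<^sub>v (cmat A *\<^sub>v x)) $ i" and ?pdy = "(cmat P *\<^sub>v (cmat D *\<^sub>v y)) $ i"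
      and ?px = "(cmat P *\<^sub>v x) $ i" and ?qx = "(cmat Q *\<^sub>v x) $ i"
      and ?aty = "(transpose_mat (cmat A) *\<^sub>v y) $ i"
      and ?atpx = "(transpose_mat (cmat A) *\<^sub>v (cmat P *\<^sub>v x)) $ i"
      and ?pdpx = "(cmat P *\<^sub>v (cmat D *\<^sub>v (cmat P *\<^sub>v x))) $ i"
    have f1: "?pa - ?pdy = \<nu> * ?px"
      using arg_cong[OF e1, of "\<lambda>u. (cmat P *\<^sub>v u) $ i"] carriers P x y i
      by (simp add: mult_minus_distrib_mat_vec[of _ n n] mult_mat_vec[of _ n n] del: index_mult_mat_vec)
    have f2: "- ?qx - ?aty = \<nu> * y $ i"
      using arg_cong[OF e2, of "\<lambda>u. u $ i"] carriers x y i by (simp del: index_mult_mat_vec)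
    have f3: "?atpx + ?pa + ?qx = ?pdpx"
      using are_solution_mult_vec_index[OF P_solution x i] by (simp add: algebra_simps del: index_mult_mat_vec)
    have L: "(transpose_mat (cmat (A - D * P)) *\<^sub>v (y - cmat P *\<^sub>v x)) $ i = ?aty - ?pdy - ?atpx + ?pdpx"
      unfolding transpose_closed_loop using carriers P x y i
      by (simp add: minus_mult_distrib_mat_vec[of _ n n] mult_minus_distrib_mat_vec[of _ n n]
          assoc_mult_mat_vec[of _ n n _ n] del: index_mult_mat_vec)
    have R: "((- \<nu>) \<cdot>\<^sub>v (y - cmat P *\<^sub>v x)) $ i = - \<nu> * (y $ i - ?px)"
      using P x y i by (simp del: index_mult_mat_vec)
    show "(transpose_mat (cmat (A - D * P)) *\<^sub>v (y - cmat P *\<^sub>v x)) $ i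
      = ((- \<nu>) \<cdot>\<^sub>v (y - cmat P *\<^sub>v x)) $ i"
      unfolding L R by (rule linear[OF f1 f2 f3])
  qed (use y P carriers in auto)
qed

text \<open>Both alternatives come from $A - D P$ being Hurwitz: for $v = (x, y)$ the defect $y - P x$ is a
  left eigenvector of $A - D P$ for $-\nu$, and if it vanishes, $x$ is a right eigenvector for $\nu$.\<close>

lemma hamiltonian_eigenvalue_dichotomy:
  assumes ev: "eigenvector Hc v \<nu>"
  shows "0 < Re \<nu> \<or> (Re \<nu> < 0 \<and> v = graph_vec P (vec_first v n))"
proof -
  define x y where "x = vec_first v n" and "y = vec_last v n"
  have v: "v \<in> carrier_vec (n + n)" and v0: "v \<noteq> 0\<^sub>v (n + n)" and Hv: "Hc *\<^sub>v v = \<nu> \<cdot>\<^sub>v v"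
    using ev unfolding eigenvector_def by auto
  have x: "x \<in> carrier_vec n" and y: "y \<in> carrier_vec n" unfolding x_def y_def by auto
  have vxy: "v = x @\<^sub>v y" unfolding x_def y_def using v by simp
  have P: "P \<in> carrier_mat n n" by (rule P_carrier)
  have M0: "A - D * P \<in> carrier_mat n n" by (rule closed_loop_carrier)
  then have M: "cmat (A - D * P) \<in> carrier_mat n n" by simp
  show ?thesis
  proof (cases "y = cmat P *\<^sub>v x")
    case False
    then have "y - cmat P *\<^sub>v x \<noteq> 0\<^sub>v n"
      using P x y by (auto simp: vec_eq_iff)
    then have "eigenvector (transpose_mat (cmat (A - D * P))) (y - cmat P *\<^sub>v x) (- \<nu>)"
      using graph_defect_eigenvector[OF x y Hv[unfolded vxy]] M P x y
      unfolding eigenvector_def by simp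
    then have "Re (- \<nu>) < 0"
      using hurwitz_transpose_eigenvalue[OF M0 P_hurwitz] unfolding eigenvalue_def by blast
    then show ?thesis by simp
  next
    case True
    have vg: "v = graph_vec P x" using vxy True unfolding graph_vec_def by simp
    then have "x \<noteq> 0\<^sub>v n" using v0 graph_vec_eq_zero_iff[OF P x] by auto
    moreover have "cmat (A - D * P) *\<^sub>v x = \<nu> \<cdot>\<^sub>v x"
    proof -
      have "cmat A *\<^sub>v x - cmat D *\<^sub>v y = \<nu> \<cdot>\<^sub>v x"
        using Hv Hc_mult_append_eq_smult_iff[OF x y] unfolding vxy by auto
      moreover have "cmat (A - D * P) *\<^sub>v x = cmat A *\<^sub>v x - cmat D *\<^sub>v y"
        unfolding True using carriers P x
        by (simp add: cmat_minus[of _ n n] cmat_mult[of _ n n _ n] minus_mult_distrib_mat_vec[of _ n n]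
            assoc_mult_mat_vec[of _ n n _ n])
      ultimately show ?thesis by simp
    qed
    ultimately have "eigenvector (cmat (A - D * P)) x \<nu>"
      using M x unfolding eigenvector_def by simp
    then have "eigenvalue (cmat (A - D * P)) \<nu>" unfolding eigenvalue_def by blast
    then have "Re \<nu> < 0" by (rule hurwitz_eigenvalue[OF P_hurwitz])
    then show ?thesis using vg unfolding x_def by simp
  qed
qed

text \<open>On the graph of $P$, a left eigenvector $b = (b_1, b_2)$ of $H$ acts as the vector
  $b_1 + P^T b_2$, which is a left eigenvector of $A - D P$ for the same eigenvalue and hence vanishes
  if that eigenvalue lies in the right half plane.\<close>

lemma left_eigenvector_orthogonal_graph:
  assumes b: "b \<in> carrier_vec (n + n)" and lb: "transpose_mat Hc *\<^sub>v b = \<nu> \<cdot>\<^sub>v b"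
    and pos: "0 < Re \<nu>" and x: "x \<in> carrier_vec n"
  shows "b \<bullet> graph_vec P x = 0"
proof -
  define r where "r = vec_first b n + transpose_mat (cmat P) *\<^sub>v vec_last b n"
  have restrict: "b \<bullet> graph_vec P y = r \<bullet> y" if "y \<in> carrier_vec n" for y
    unfolding r_def by (rule graph_vec_scalar_prod[OF P_carrier b that])
  have r: "r \<in> carrier_vec n" unfolding r_def using P_carrier by simp
  have M0: "A - D * P \<in> carrier_mat n n" by (rule closed_loop_carrier)
  then have M: "cmat (A - D * P) \<in> carrier_mat n n" by simp
  have Mr: "transpose_mat (cmat (A - D * P)) *\<^sub>v r = \<nu> \<cdot>\<^sub>v r"
  proof (rule vec_eq_if_scalar_prod_eq)
    fix y :: "complex vec" assume y: "y \<in> carrier_vec n"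
    have My: "cmat (A - D * P) *\<^sub>v y \<in> carrier_vec n" using M y by simp
    have "(transpose_mat (cmat (A - D * P)) *\<^sub>v r) \<bullet> y = r \<bullet> (cmat (A - D * P) *\<^sub>v y)"
      by (rule transpose_vec_mult_scalar[OF M y r])
    also have "\<dots> = b \<bullet> (Hc *\<^sub>v graph_vec P y)"
      using restrict[OF My] Hc_mult_graph_vec[OF P_solution y] by simp
    also have "\<dots> = \<nu> * (r \<bullet> y)"
      using left_eigenvector_scalar_prod[OF Hc_carrier b _ lb] restrict[OF y] P_carrier y by simp
    also have "\<dots> = (\<nu> \<cdot>\<^sub>v r) \<bullet> y" using r y by simp
    finally show "(transpose_mat (cmat (A - D * P)) *\<^sub>v r) \<bullet> y = (\<nu> \<cdot>\<^sub>v r) \<bullet> y" .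
  qed (use M r in auto)
  have "\<not> eigenvector (transpose_mat (cmat (A - D * P))) r \<nu>"
    using hurwitz_transpose_eigenvalue[OF M0 P_hurwitz] pos unfolding eigenvalue_def by force
  then have "r = 0\<^sub>v n" using Mr M r unfolding eigenvector_def by simp
  then show ?thesis using restrict[OF x] x by simp
qed

end

section \<open>Perturbing the stable eigenvalue\<close>

text \<open>The perturbation of the theorem is the case $\nu = \mu_j$, $a = v_j$, $b = p_j$,
  $a' = v_{-j}$, $b' = q_j$, $c = 1$ if $\mathrm{Re}\,\mu_j < 0$, and the case $\nu = -\mu_j$ with the
  two eigenpairs exchanged and $c = -1$ otherwise.\<close>

locale stable_eigenvector_perturbation = stabilizing_riccati +
  fixes \<nu> :: complex and a b a' b' :: "complex vec" and c d :: real
  assumes a_eigenvector: "eigenvector Hc a \<nu>"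
    and b_carrier: "b \<in> carrier_vec (n + n)"
    and a'_carrier: "a' \<in> carrier_vec (n + n)"
    and b'_carrier: "b' \<in> carrier_vec (n + n)"
    and b_left: "transpose_mat Hc *\<^sub>v b = \<nu> \<cdot>\<^sub>v b"
    and b'_left: "transpose_mat Hc *\<^sub>v b' = (- \<nu>) \<cdot>\<^sub>v b'"
    and b_a: "b \<bullet> a = complex_of_real c"
    and stable: "Re \<nu> < 0"
    and nonreal: "Im \<nu> \<noteq> 0"
begin

abbreviation Kc :: "complex mat" where
  "Kc \<equiv> cmat (hamiltonian A D Q + (2 * d) \<cdot>\<^sub>m map_mat Re (outer_prod a b + outer_prod a' b'))"

lemma a_carrier: "a \<in> carrier_vec (n + n)"
  and Hc_a: "Hc *\<^sub>v a = \<nu> \<cdot>\<^sub>v a"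
  using a_eigenvector unfolding eigenvector_def by auto

lemma a_in_graph: "a = graph_vec P (vec_first a n)"
  using hamiltonian_eigenvalue_dichotomy[OF a_eigenvector] stable by auto

lemma conjugate_a_in_graph: "conjugate a = graph_vec P (conjugate (vec_first a n))"
  using conjugate_graph_vec[OF P_carrier, of "vec_first a n"] a_in_graph by simp

lemma b_conjugate_a: "b \<bullet> conjugate a = 0"
proof (rule left_right_eigenvectors_orthogonal[OF Hc_carrier _ b_carrier _ b_left])
  show "conjugate a \<in> carrier_vec (n + n)" using a_carrier by simp
  show "Hc *\<^sub>v conjugate a = cnj \<nu> \<cdot>\<^sub>v conjugate a"
    using cmat_eigen_conjugate[OF _ Hc_a] a_carrier by simp
  show "cnj \<nu> \<noteq> \<nu>" using nonreal by (simp add: complex_eq_iff)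
qed

lemma conjugate_b_a: "conjugate b \<bullet> a = 0"
  and conjugate_b_conjugate_a: "conjugate b \<bullet> conjugate a = complex_of_real c"
  using conjugate_sprod_vec[OF b_carrier, of "conjugate a"] conjugate_sprod_vec[OF b_carrier a_carrier]
    b_conjugate_a b_a a_carrier by simp_all

lemma conjugate_b_left: "transpose_mat Hc *\<^sub>v conjugate b = cnj \<nu> \<cdot>\<^sub>v conjugate b"
  and conjugate_b'_left: "transpose_mat Hc *\<^sub>v conjugate b' = cnj (- \<nu>) \<cdot>\<^sub>v conjugate b'"
  using cmat_eigen_conjugate[of b "transpose_mat (hamiltonian A D Q)" \<nu>]
    cmat_eigen_conjugate[of b' "transpose_mat (hamiltonian A D Q)" "- \<nu>"]
    b_left b'_left b_carrier b'_carrier by (simp_all add: cmat_transpose)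

lemma b'_orthogonal_graph:
  assumes x: "x \<in> carrier_vec n"
  shows "b' \<bullet> graph_vec P x = 0" and "conjugate b' \<bullet> graph_vec P x = 0"
  using left_eigenvector_orthogonal_graph[OF b'_carrier b'_left _ x]
    left_eigenvector_orthogonal_graph[OF _ conjugate_b'_left _ x] b'_carrier stable by simp_all

lemma Kc_mult_graph_vec:
  assumes x: "x \<in> carrier_vec n"
  shows "Kc *\<^sub>v graph_vec P x = Hc *\<^sub>v graph_vec P x + complex_of_real d \<cdot>\<^sub>v
    ((b \<bullet> graph_vec P x) \<cdot>\<^sub>v a + (conjugate b \<bullet> graph_vec P x) \<cdot>\<^sub>v conjugate a)"
proof -
  have w: "graph_vec P x \<in> carrier_vec (n + n)" using P_carrier x by simp
  show ?thesis
    unfolding cmat_Re_outer_prod_perturbation_mult_vec[OF hamiltonian_carrier a_carrier b_carrier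
      a'_carrier b'_carrier w] b'_orthogonal_graph[OF x]
    using a_carrier a'_carrier w by (intro eq_vecI) auto
qed

lemma Kc_graph_invariant:
  assumes x: "x \<in> carrier_vec n"
  shows "\<exists>y \<in> carrier_vec n. Kc *\<^sub>v graph_vec P x = graph_vec P y"
proof -
  let ?a1 = "vec_first a n" and ?w = "graph_vec P x"
  let ?y = "cmat (A - D * P) *\<^sub>v x + complex_of_real d \<cdot>\<^sub>v
    ((b \<bullet> ?w) \<cdot>\<^sub>v ?a1 + (conjugate b \<bullet> ?w) \<cdot>\<^sub>v conjugate ?a1)"
  have P: "P \<in> carrier_mat n n" by (rule P_carrier)
  have a1: "?a1 \<in> carrier_vec n" by simp
  have Mx: "cmat (A - D * P) *\<^sub>v x \<in> carrier_vec n" using closed_loop_carrier x by simp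
  have "graph_vec P ?y = graph_vec P (cmat (A - D * P) *\<^sub>v x) + complex_of_real d \<cdot>\<^sub>v
    ((b \<bullet> ?w) \<cdot>\<^sub>v graph_vec P ?a1 + (conjugate b \<bullet> ?w) \<cdot>\<^sub>v graph_vec P (conjugate ?a1))"
    using P a1 Mx by (simp add: graph_vec_add graph_vec_smult)
  also have "\<dots> = Kc *\<^sub>v ?w"
    unfolding Kc_mult_graph_vec[OF x] Hc_mult_graph_vec[OF P_solution x]
      a_in_graph[symmetric] conjugate_a_in_graph[symmetric] ..
  finally have "Kc *\<^sub>v ?w = graph_vec P ?y" ..
  moreover have "?y \<in> carrier_vec n" using Mx a1 by simp
  ultimately show ?thesis by blast
qed

lemma b_Kc_graph_vec:
  assumes y: "y \<in> carrier_vec n"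
  shows "b \<bullet> (Kc *\<^sub>v graph_vec P y) = (\<nu> + complex_of_real (c * d)) * (b \<bullet> graph_vec P y)"
proof -
  have w: "graph_vec P y \<in> carrier_vec (n + n)" using P_carrier y by simp
  show ?thesis
    unfolding Kc_mult_graph_vec[OF y] using left_eigenvector_scalar_prod[OF Hc_carrier b_carrier w b_left]
      b_a b_conjugate_a a_carrier b_carrier mult_mat_vec_carrier[OF Hc_carrier w]
    by (simp add: scalar_prod_add_distrib[of _ "n + n"] algebra_simps)
qed

lemma conjugate_b_Kc_graph_vec:
  assumes y: "y \<in> carrier_vec n"
  shows "conjugate b \<bullet> (Kc *\<^sub>v graph_vec P y)
    = (cnj \<nu> + complex_of_real (c * d)) * (conjugate b \<bullet> graph_vec P y)"
proof -
  have w: "graph_vec P y \<in> carrier_vec (n + n)" using P_carrier y by simp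
  have cb: "conjugate b \<in> carrier_vec (n + n)" using b_carrier by simp
  show ?thesis
    unfolding Kc_mult_graph_vec[OF y] using left_eigenvector_scalar_prod[OF Hc_carrier cb w conjugate_b_left]
      conjugate_b_a conjugate_b_conjugate_a a_carrier cb mult_mat_vec_carrier[OF Hc_carrier w]
    by (simp add: scalar_prod_add_distrib[of _ "n + n"] algebra_simps)
qed

lemma Kc_graph_eigenvalue:
  assumes y: "y \<in> carrier_vec n" and y0: "y \<noteq> 0\<^sub>v n"
    and ev: "Kc *\<^sub>v graph_vec P y = l \<cdot>\<^sub>v graph_vec P y"
    and cond: "Re \<nu> + c * d < 0"
  shows "Re l < 0"
proof -
  let ?w = "graph_vec P y"
  have w: "?w \<in> carrier_vec (n + n)" using P_carrier y by simp
  have ca: "conjugate a \<in> carrier_vec (n + n)" using a_carrier by simp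
  have Hw: "Hc *\<^sub>v ?w \<in> carrier_vec (n + n)" using mult_mat_vec_carrier[OF Hc_carrier w] .
  have eb: "l * (b \<bullet> ?w) = (\<nu> + complex_of_real (c * d)) * (b \<bullet> ?w)"
    using b_Kc_graph_vec[OF y] ev w b_carrier by simp
  have ecb: "l * (conjugate b \<bullet> ?w) = (cnj \<nu> + complex_of_real (c * d)) * (conjugate b \<bullet> ?w)"
    using conjugate_b_Kc_graph_vec[OF y] ev w b_carrier by simp
  consider "b \<bullet> ?w \<noteq> 0" | "conjugate b \<bullet> ?w \<noteq> 0" | "b \<bullet> ?w = 0" "conjugate b \<bullet> ?w = 0" by blast
  then show ?thesis
  proof cases
    case 1
    then have "l = \<nu> + complex_of_real (c * d)" using eb by simp
    then show ?thesis using cond by simp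
  next
    case 2
    then have "l = cnj \<nu> + complex_of_real (c * d)" using ecb by simp
    then show ?thesis using cond by simp
  next
    case 3
    have "Kc *\<^sub>v ?w = Hc *\<^sub>v ?w"
      unfolding Kc_mult_graph_vec[OF y] 3 using a_carrier ca Hw by (intro eq_vecI) auto
    then have "graph_vec P (cmat (A - D * P) *\<^sub>v y) = graph_vec P (l \<cdot>\<^sub>v y)"
      using ev Hc_mult_graph_vec[OF P_solution y] graph_vec_smult[OF P_carrier y] by simp
    then have "cmat (A - D * P) *\<^sub>v y = l \<cdot>\<^sub>v y"
      using graph_vec_inj[OF P_carrier] closed_loop_carrier y by simp
    then have "eigenvector (cmat (A - D * P)) y l"
      using closed_loop_carrier y y0 unfolding eigenvector_def by simp
    then show ?thesis using hurwitz_eigenvalue[OF P_hurwitz] unfolding eigenvalue_def by blast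
  qed
qed

lemma perturbed_stabilizing_solution:
  assumes new: "riccati_data n At Qt Dt"
    and K: "hamiltonian A D Q + (2 * d) \<cdot>\<^sub>m map_mat Re (outer_prod a b + outer_prod a' b')
      = hamiltonian At Dt Qt"
    and cond: "Re \<nu> + c * d < 0"
  shows "stabilizing_solution n At Qt Dt P"
proof -
  interpret new: riccati_data n At Qt Dt by (rule new)
  have sol: "are_solution n At Qt Dt P"
    using new.are_solution_if_graph_invariant[OF P_carrier] Kc_graph_invariant unfolding K by blast
  have "Re l < 0" if ev: "eigenvalue (cmat (At - Dt * P)) l" for l
  proof -
    obtain y where "eigenvector (cmat (At - Dt * P)) y l" using ev unfolding eigenvalue_def by blast
    then have y: "y \<in> carrier_vec n" "y \<noteq> 0\<^sub>v n" and ey: "cmat (At - Dt * P) *\<^sub>v y = l \<cdot>\<^sub>v y"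
      unfolding eigenvector_def by simp_all
    have "Kc *\<^sub>v graph_vec P y = l \<cdot>\<^sub>v graph_vec P y"
      unfolding K new.Hc_mult_graph_vec[OF sol y(1)] ey graph_vec_smult[OF P_carrier y(1)] ..
    then show ?thesis by (rule Kc_graph_eigenvalue[OF y _ cond])
  qed
  then show ?thesis using sol unfolding stabilizing_solution_def hurwitz_def by blast
qed

end

lemma (in stabilizing_riccati) eigenpair_perturbation_stabilizing:
  assumes vj: "eigenvector Hc vj \<mu>" and vmj: "eigenvector Hc vmj (- \<mu>)"
    and p: "p \<in> carrier_vec (n + n)" "transpose_mat Hc *\<^sub>v p = \<mu> \<cdot>\<^sub>v p"
    and q: "q \<in> carrier_vec (n + n)" "transpose_mat Hc *\<^sub>v q = (- \<mu>) \<cdot>\<^sub>v q"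
    and p_vj: "p \<bullet> vj = 1" and q_vmj: "q \<bullet> vmj = - 1"
    and nonreal: "Im \<mu> \<noteq> 0" and shift: "\<Delta> / Re \<mu> > - 1"
    and new: "riccati_data n At Qt Dt"
    and K: "hamiltonian A D Q + (2 * \<Delta>) \<cdot>\<^sub>m map_mat Re (outer_prod vj p + outer_prod vmj q)
      = hamiltonian At Dt Qt"
  shows "stabilizing_solution n At Qt Dt P"
proof -
  have vj_carrier: "vj \<in> carrier_vec (n + n)" and vmj_carrier: "vmj \<in> carrier_vec (n + n)"
    using vj vmj unfolding eigenvector_def by simp_all
  have "Re \<mu> \<noteq> 0" using hamiltonian_eigenvalue_dichotomy[OF vj] by auto
  then consider "Re \<mu> < 0" | "0 < Re \<mu>" by linarith
  then show ?thesis
  proof cases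
    case 1
    interpret stable_eigenvector_perturbation n A Q D P \<mu> vj p vmj q 1 \<Delta>
      using vj p q p_vj 1 nonreal vmj_carrier by unfold_locales simp_all
    show ?thesis
      using perturbed_stabilizing_solution[OF new K] shift 1 by (simp add: less_divide_eq)
  next
    case 2
    interpret stable_eigenvector_perturbation n A Q D P "- \<mu>" vmj q vj p "- 1" \<Delta>
      using vmj p q q_vmj 2 nonreal vj_carrier by unfold_locales simp_all
    have "outer_prod vmj q + outer_prod vj p = outer_prod vj p + outer_prod vmj q"
      using vj_carrier vmj_carrier p q by (intro comm_add_mat[of _ "n + n" "n + n"]) auto
    then show ?thesis
      using perturbed_stabilizing_solution[OF new] K shift 2 by (simp add: less_divide_eq)
  qed
qed

lemma (in stabilizing_riccati) eigenpair_perturbation: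
  assumes ev1: "eigenvector Hc vj \<mu>" and ev2: "eigenvector Hc vmj (- \<mu>)"
    and nz: "vj \<bullet> (Jmat n *\<^sub>v vmj) \<noteq> 0" and nonreal: "Im \<mu> \<noteq> 0"
  defines "\<theta> \<equiv> 1 / (vj \<bullet> (Jmat n *\<^sub>v vmj))"
  shows "\<exists>At Qt Dt. At \<in> carrier_mat n n \<and> Qt \<in> carrier_mat n n \<and> Dt \<in> carrier_mat n n \<and>
    transpose_mat Qt = Qt \<and> transpose_mat Dt = Dt \<and>
    hamiltonian A D Q + (2 * \<Delta>) \<cdot>\<^sub>m map_mat Re (outer_prod vj (\<theta> \<cdot>\<^sub>v (Jmat n *\<^sub>v vmj))
      + outer_prod vmj (\<theta> \<cdot>\<^sub>v (Jmat n *\<^sub>v vj))) = hamiltonian At Dt Qt \<and>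
    (\<Delta> / Re \<mu> > -1 \<longrightarrow>
      stabilizing_solution n At Qt Dt P \<and> (\<forall>X. stabilizing_solution n At Qt Dt X \<longrightarrow> X = P))"
proof -
  have vj: "vj \<in> carrier_vec (n + n)" and Hvj: "Hc *\<^sub>v vj = \<mu> \<cdot>\<^sub>v vj"
    and vmj: "vmj \<in> carrier_vec (n + n)" and Hvmj: "Hc *\<^sub>v vmj = (- \<mu>) \<cdot>\<^sub>v vmj"
    using ev1 ev2 unfolding eigenvector_def by simp_all
  obtain At Qt Dt where new: "riccati_data n At Qt Dt"
    and K: "hamiltonian A D Q + (2 * \<Delta>) \<cdot>\<^sub>m map_mat Re (outer_prod vj (\<theta> \<cdot>\<^sub>v (Jmat n *\<^sub>v vmj))
      + outer_prod vmj (\<theta> \<cdot>\<^sub>v (Jmat n *\<^sub>v vj))) = hamiltonian At Dt Qt"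
    using Jmat_perturbation_hamiltonian[OF vj vmj] unfolding riccati_data_def by blast
  have "stabilizing_solution n At Qt Dt P" if "\<Delta> / Re \<mu> > - 1"
    using eigenpair_perturbation_stabilizing[OF ev1 ev2 _ _ _ _ _ _ nonreal that new K]
      Jmat_left_eigenvector[OF vmj Hvmj] Jmat_left_eigenvector[OF vj Hvj]
      Jmat_normalized_scalar_prods[OF vj vmj nz \<theta>_def[THEN meta_eq_to_obj_eq]] vj vmj by (simp add: Jmat_mult_carrier)
  then show ?thesis
    using new K riccati_data.stabilizing_solution_unique[OF new] unfolding riccati_data_def by blast
qed

theorem theorem2:
  fixes n :: nat and A Q D P :: "real mat" and \<mu> :: complex and vj vmj :: "complex vec"
  assumes A: "A \<in> carrier_mat n n" and Qc: "Q \<in> carrier_mat n n" and Dc: "D \<in> carrier_mat n n"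
    and Qsym: "transpose_mat Q = Q" and Dsym: "transpose_mat D = D"
    and stab: "stabilizable n A D" and det: "detectable n Q A"
    and P: "stabilizing_solution n A Q D P"
    and nonreal: "Im \<mu> \<noteq> 0"
    and pm1: "partial_multiplicity_one (cmat (hamiltonian A D Q)) \<mu>"
    and ev1: "eigenvector (cmat (hamiltonian A D Q)) vj \<mu>"
    and ev2: "eigenvector (cmat (hamiltonian A D Q)) vmj (- \<mu>)"
    and nz: "vj \<bullet> (Jmat n *\<^sub>v vmj) \<noteq> 0"
  shows "\<forall>\<Delta>\<mu> :: real.
    (let \<theta> = 1 / (vj \<bullet> (Jmat n *\<^sub>v vmj));
         p = \<theta> \<cdot>\<^sub>v (Jmat n *\<^sub>v vmj);
         q = \<theta> \<cdot>\<^sub>v (Jmat n *\<^sub>v vj)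
     in \<exists>At Qt Dt.
       At \<in> carrier_mat n n \<and> Qt \<in> carrier_mat n n \<and> Dt \<in> carrier_mat n n \<and>
       transpose_mat Qt = Qt \<and> transpose_mat Dt = Dt \<and>
       hamiltonian A D Q + (2 * \<Delta>\<mu>) \<cdot>\<^sub>m map_mat Re (outer_prod vj p + outer_prod vmj q)
         = hamiltonian At Dt Qt \<and>
       (\<Delta>\<mu> / Re \<mu> > -1 \<longrightarrow>
          stabilizing_solution n At Qt Dt P \<and>
          (\<forall>X. stabilizing_solution n At Qt Dt X \<longrightarrow> X = P)))"
proof -
  interpret stabilizing_riccati n A Q D P
    using A Qc Dc Qsym Dsym P by unfold_locales
  show ?thesis
    unfolding Let_def using eigenpair_perturbation[OF ev1 ev2 nz nonreal] by blast
qed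

end
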